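(* Let $\theta\sim G$ with bounded support and let $Y$, taking countably many values, have conditional probability mass function $f_\theta$ given $\theta$; let $Y_1,\dots,Y_n$ be i.i.d. with mass function $p_y=P_G(Y=y)=\int f_\theta(y)\,dG(\theta)$. For a sequence $\varepsilon_n\to0$ let $S_n=\{y: p_y\ge\varepsilon_n/n\}$ and assume: (i) $P_G(Y\in S_n)=1-o(1/n)$; (ii) for $\varepsilon_n\to0$ sufficiently slowly, $|S_n|=O(\log n)$. Let $\hat G$ be a generalized maximum likelihood estimator of $G$, i.e. a maximizer over probability distributions $\tilde G$ of $\prod_{i=1}^n\int f_\theta(Y_i)\,d\tilde G(\theta)$. Let $\eta$ be a function of $\theta$ and let $\Psi=\Psi_{\hat G}$ be a (uniformly) bounded function of $y$ satisfying $E_{\hat G}\Psi_{\hat G}(Y)=E_{\hat G}\eta(\Theta)$, where under $E_{\hat G}$, $\Theta\sim\hat G$ and $Y\mid\Theta\sim f_\Theta$. Then for every $\alpha>0$, $$\hat\eta\equiv E_{\hat G}\eta(\Theta)=\frac1n\sum_{i=1}^n\Psi_{\hat G}(Y_i)+o_P\Big(\frac{(\log n)^{(1+\alpha)/2}}{\sqrt n}\Big).$$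
   Context: Conditions (i)–(ii) are the paper's assumption on $G$ (stated in terms of "an $o(1)$ function"). *)

theory Defs
  imports "HOL-Probability.Probability" "HOL-Library.Landau_Symbols"
begin

text \<open>Conditional pmf of Y given theta is F theta. The mixture likelihood of a sample
  ys (first n coordinates) under a mixing distribution H on the reals.\<close>
definition mix_lik :: "(real \<Rightarrow> nat pmf) \<Rightarrow> real measure \<Rightarrow> nat \<Rightarrow> (nat \<Rightarrow> nat) \<Rightarrow> real" where
  "mix_lik F H n ys = (\<Prod>i<n. \<integral>\<theta>. pmf (F \<theta>) (ys i) \<partial>H)"

definition is_GMLE :: "(real \<Rightarrow> nat pmf) \<Rightarrow> nat \<Rightarrow> (nat \<Rightarrow> nat) \<Rightarrow> real measure \<Rightarrow> bool" where
  "is_GMLE F n ys Gh \<longleftrightarrow> prob_space Gh \<and> sets Gh = sets borel \<and>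
     (\<forall>H. prob_space H \<and> sets H = sets borel \<longrightarrow> mix_lik F H n ys \<le> mix_lik F Gh n ys)"

definition mix_expect :: "(real \<Rightarrow> nat pmf) \<Rightarrow> real measure \<Rightarrow> (nat \<Rightarrow> real) \<Rightarrow> real" where
  "mix_expect F H g = (\<integral>\<theta>. measure_pmf.expectation (F \<theta>) g \<partial>H)"

end

theory Submission
  imports Defs
begin

(* Write p for the marginal pmf of Y under G, q for the marginal under the GMLE and r for the
   empirical frequencies of Y_1, ..., Y_n. Since Psi is bounded by B and unbiased under the GMLE,
   the error of the plug-in estimate is at most B times the l1 distance of q from r on S_n plus the
   q-mass outside S_n. The true G competes in the likelihood maximisation, so
   prod q(Y_i) >= prod p(Y_i), and ln x <= 2 (sqrt x - 1) turns this into
   sum_y r_y (sqrt (q_y / p_y) - 1) >= 0. Expanding this around p bounds the Hellinger distance of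
   q from p on S_n by the chi-square distance of r from p, and so bounds the error by
   B (9 sqrt chi2 + 4 sqrt tau + tau) with tau = 1 - P(S_n). All observations lie in S_n except
   with probability n tau = o(1), and E chi2 <= |S_n| / n = O(log n / n), so by Markov's
   inequality chi2 exceeds a fixed multiple of (log n)^(1+alpha) / n only with probability
   O((log n)^(-alpha)). *)

definition chi_square :: "'a set \<Rightarrow> ('a \<Rightarrow> real) \<Rightarrow> ('a \<Rightarrow> real) \<Rightarrow> real" where
  "chi_square S p r = (\<Sum>y\<in>S. (r y - p y)\<^sup>2 / p y)"

definition hellinger :: "'a set \<Rightarrow> ('a \<Rightarrow> real) \<Rightarrow> ('a \<Rightarrow> real) \<Rightarrow> real" where
  "hellinger S p q = L2_set (\<lambda>y. sqrt (q y) - sqrt (p y)) S"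

lemma chi_square_nonneg: "(\<And>y. y \<in> S \<Longrightarrow> p y > 0) \<Longrightarrow> chi_square S p r \<ge> 0"
  unfolding chi_square_def by (intro sum_nonneg divide_nonneg_pos) auto

lemma sqrt_chi_square_eq_L2_set:
  assumes "\<And>y. y \<in> S \<Longrightarrow> p y > 0"
  shows "sqrt (chi_square S p r) = L2_set (\<lambda>y. (r y - p y) / sqrt (p y)) S"
  unfolding L2_set_def chi_square_def using assms
  by (intro arg_cong[where f=sqrt] sum.cong) (auto simp: power_divide less_imp_le)

lemma sum_abs_diff_le_sqrt_chi_square:
  assumes p: "\<And>y. y \<in> S \<Longrightarrow> p y > 0" and sum_p: "(\<Sum>y\<in>S. p y) \<le> 1"
  shows "(\<Sum>y\<in>S. \<bar>r y - p y\<bar>) \<le> sqrt (chi_square S p r)"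
proof -
  have "(\<Sum>y\<in>S. \<bar>r y - p y\<bar>) = (\<Sum>y\<in>S. \<bar>sqrt (p y)\<bar> * \<bar>(r y - p y) / sqrt (p y)\<bar>)"
  proof (intro sum.cong refl)
    fix y assume "y \<in> S"
    then have "sqrt (p y) \<noteq> 0" using p[of y] by simp
    then have "sqrt (p y) * ((r y - p y) / sqrt (p y)) = r y - p y" by simp
    then show "\<bar>r y - p y\<bar> = \<bar>sqrt (p y)\<bar> * \<bar>(r y - p y) / sqrt (p y)\<bar>"
      by (simp only: abs_mult[symmetric])
  qed
  also have "\<dots> \<le> L2_set (\<lambda>y. sqrt (p y)) S * L2_set (\<lambda>y. (r y - p y) / sqrt (p y)) S"
    by (rule L2_set_mult_ineq)
  also have "\<dots> = L2_set (\<lambda>y. sqrt (p y)) S * sqrt (chi_square S p r)"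
    by (simp add: sqrt_chi_square_eq_L2_set[OF p])
  also have "\<dots> \<le> 1 * sqrt (chi_square S p r)"
  proof (rule mult_right_mono)
    have "(\<Sum>y\<in>S. (sqrt (p y))\<^sup>2) = (\<Sum>y\<in>S. p y)" using p by (intro sum.cong) (auto simp: less_imp_le)
    then show "L2_set (\<lambda>y. sqrt (p y)) S \<le> 1" using sum_p unfolding L2_set_def by simp
  qed (simp add: chi_square_nonneg[OF p])
  finally show ?thesis by simp
qed

lemma sum_abs_diff_le_hellinger:
  assumes p: "\<And>y. y \<in> S \<Longrightarrow> p y \<ge> 0" and q: "\<And>y. y \<in> S \<Longrightarrow> q y \<ge> 0"
    and sum_p: "(\<Sum>y\<in>S. p y) \<le> 1" and sum_q: "(\<Sum>y\<in>S. q y) \<le> 1"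
  shows "(\<Sum>y\<in>S. \<bar>p y - q y\<bar>) \<le> 2 * hellinger S p q"
proof -
  have "(\<Sum>y\<in>S. \<bar>p y - q y\<bar>) = (\<Sum>y\<in>S. \<bar>sqrt (q y) - sqrt (p y)\<bar> * \<bar>sqrt (p y) + sqrt (q y)\<bar>)"
  proof (intro sum.cong refl)
    fix y assume y: "y \<in> S"
    have "p y - q y = (sqrt (p y) - sqrt (q y)) * (sqrt (p y) + sqrt (q y))"
      using p[OF y] q[OF y] by (simp add: algebra_simps)
    then show "\<bar>p y - q y\<bar> = \<bar>sqrt (q y) - sqrt (p y)\<bar> * \<bar>sqrt (p y) + sqrt (q y)\<bar>"
      by (simp add: abs_mult abs_minus_commute)
  qed
  also have "\<dots> \<le> hellinger S p q * L2_set (\<lambda>y. sqrt (p y) + sqrt (q y)) S"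
    unfolding hellinger_def by (rule L2_set_mult_ineq)
  also have "\<dots> \<le> hellinger S p q * 2"
  proof (rule mult_left_mono)
    have "(\<Sum>y\<in>S. (sqrt (p y) + sqrt (q y))\<^sup>2) \<le> (\<Sum>y\<in>S. 2 * (p y + q y))"
    proof (intro sum_mono)
      fix y assume y: "y \<in> S"
      have "0 \<le> (sqrt (p y) - sqrt (q y))\<^sup>2" by simp
      then show "(sqrt (p y) + sqrt (q y))\<^sup>2 \<le> 2 * (p y + q y)"
        using p[OF y] q[OF y] by (simp add: power2_eq_square algebra_simps)
    qed
    also have "\<dots> \<le> 4" using sum_p sum_q by (simp add: sum.distrib sum_distrib_left[symmetric])
    finally show "L2_set (\<lambda>y. sqrt (p y) + sqrt (q y)) S \<le> 2"
      unfolding L2_set_def by (metis real_sqrt_four real_sqrt_le_iff)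
  qed (simp add: hellinger_def)
  finally show ?thesis by simp
qed

text \<open>The likelihood inequality \<open>\<Sum> r (\<surd>(q/p) - 1) \<ge> 0\<close> splits, term by term, into a
  cross term bounded by Cauchy--Schwarz, minus half the squared Hellinger distance, plus half
  the mass defect.\<close>
lemma hellinger_sq_le_of_sqrt_ratio:
  assumes p: "\<And>y. y \<in> S \<Longrightarrow> p y > 0" and q: "\<And>y. y \<in> S \<Longrightarrow> q y \<ge> 0"
    and sum_p: "(\<Sum>y\<in>S. p y) = 1 - \<tau>" and sum_q: "(\<Sum>y\<in>S. q y) \<le> 1"
    and lik: "(\<Sum>y\<in>S. r y * (sqrt (q y / p y) - 1)) \<ge> 0"
  shows "(hellinger S p q)\<^sup>2 \<le> 2 * sqrt (chi_square S p r) * hellinger S p q + \<tau>"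
proof -
  define h where "h = hellinger S p q"
  define A where "A = (\<Sum>y\<in>S. (r y - p y) / sqrt (p y) * (sqrt (q y) - sqrt (p y)))"
  have summand: "r y * (sqrt (q y / p y) - 1) = (r y - p y) / sqrt (p y) * (sqrt (q y) - sqrt (p y))
      - (sqrt (q y) - sqrt (p y))\<^sup>2 / 2 + (q y - p y) / 2" if y: "y \<in> S" for y
  proof -
    have "sqrt (p y) > 0" "(sqrt (p y))\<^sup>2 = p y" "(sqrt (q y))\<^sup>2 = q y" using p[OF y] q[OF y] by auto
    then show ?thesis by (simp add: real_sqrt_divide field_simps power2_eq_square)
  qed
  have h_sq: "h\<^sup>2 = (\<Sum>y\<in>S. (sqrt (q y) - sqrt (p y))\<^sup>2)"
    unfolding h_def hellinger_def L2_set_def by (simp add: sum_nonneg)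
  have "(\<Sum>y\<in>S. r y * (sqrt (q y / p y) - 1)) = (\<Sum>y\<in>S. (r y - p y) / sqrt (p y) *
      (sqrt (q y) - sqrt (p y)) - (sqrt (q y) - sqrt (p y))\<^sup>2 / 2 + (q y - p y) / 2)"
    by (rule sum.cong[OF refl summand])
  also have "\<dots> = A - h\<^sup>2 / 2 + ((\<Sum>y\<in>S. q y) - (\<Sum>y\<in>S. p y)) / 2"
    unfolding A_def h_sq by (simp add: sum.distrib sum_subtractf flip: sum_divide_distrib)
  finally have "0 \<le> A - h\<^sup>2 / 2 + ((\<Sum>y\<in>S. q y) - (\<Sum>y\<in>S. p y)) / 2"
    using lik by simp
  moreover have "A \<le> sqrt (chi_square S p r) * h"
  proof -
    have "A \<le> (\<Sum>y\<in>S. \<bar>(r y - p y) / sqrt (p y)\<bar> * \<bar>sqrt (q y) - sqrt (p y)\<bar>)"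
      unfolding A_def by (intro sum_mono) (metis abs_ge_self abs_mult)
    also have "\<dots> \<le> L2_set (\<lambda>y. (r y - p y) / sqrt (p y)) S * h"
      unfolding h_def hellinger_def by (rule L2_set_mult_ineq)
    also have "\<dots> = sqrt (chi_square S p r) * h" by (simp add: sqrt_chi_square_eq_L2_set[OF p])
    finally show ?thesis .
  qed
  ultimately have "h\<^sup>2 \<le> 2 * (sqrt (chi_square S p r) * h) + \<tau>" using sum_p sum_q by (simp add: field_simps)
  then show ?thesis unfolding h_def by (simp only: mult.assoc)
qed

lemma le_add_sqrt_of_square_le:
  fixes h a \<tau> :: real
  assumes "0 \<le> h" "0 \<le> a" "0 \<le> \<tau>" "h\<^sup>2 \<le> 2 * a * h + \<tau>"
  shows "h \<le> 2 * a + sqrt \<tau>"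
proof (rule ccontr)
  assume "\<not> ?thesis"
  then have gap: "sqrt \<tau> < h - 2 * a" by simp
  have h_pos: "h > 0" using gap assms(2) real_sqrt_ge_zero[OF assms(3)] by linarith
  have "\<tau> = sqrt \<tau> * sqrt \<tau>" using assms(3) by simp
  also have "\<dots> \<le> sqrt \<tau> * h" using gap assms(2,3) by (intro mult_left_mono) auto
  also have "\<dots> < (h - 2 * a) * h" using gap h_pos by (intro mult_strict_right_mono)
  finally show False using assms(4) by (simp add: power2_eq_square algebra_simps)
qed

lemma fitted_l1_bound_of_sqrt_ratio:
  assumes p: "\<And>y. y \<in> S \<Longrightarrow> p y > 0" and q: "\<And>y. y \<in> S \<Longrightarrow> q y \<ge> 0"
    and sum_p: "(\<Sum>y\<in>S. p y) = 1 - \<tau>" and \<tau>: "\<tau> \<ge> 0" and sum_q: "(\<Sum>y\<in>S. q y) \<le> 1"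
    and lik: "(\<Sum>y\<in>S. r y * (sqrt (q y / p y) - 1)) \<ge> 0"
  shows "(\<Sum>y\<in>S. \<bar>q y - r y\<bar>) + (1 - (\<Sum>y\<in>S. q y))
           \<le> 9 * sqrt (chi_square S p r) + 4 * sqrt \<tau> + \<tau>"
proof -
  let ?H = "hellinger S p q" and ?\<chi> = "sqrt (chi_square S p r)"
  have H_le: "?H \<le> 2 * ?\<chi> + sqrt \<tau>"
    using hellinger_sq_le_of_sqrt_ratio[OF p q sum_p sum_q lik] chi_square_nonneg[OF p] \<tau>
    by (intro le_add_sqrt_of_square_le) (auto simp: hellinger_def)
  have sum_p_le: "(\<Sum>y\<in>S. p y) \<le> 1" using sum_p \<tau> by linarith
  have pq: "(\<Sum>y\<in>S. \<bar>p y - q y\<bar>) \<le> 2 * ?H"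
    using p q sum_p_le sum_q by (intro sum_abs_diff_le_hellinger) (auto simp: less_imp_le)
  have rp: "(\<Sum>y\<in>S. \<bar>r y - p y\<bar>) \<le> ?\<chi>"
    by (rule sum_abs_diff_le_sqrt_chi_square[OF p sum_p_le])
  have "(\<Sum>y\<in>S. \<bar>q y - r y\<bar>) \<le> (\<Sum>y\<in>S. \<bar>p y - q y\<bar>) + (\<Sum>y\<in>S. \<bar>r y - p y\<bar>)"
    by (subst sum.distrib[symmetric]) (intro sum_mono, simp)
  moreover have "(\<Sum>y\<in>S. p y) - (\<Sum>y\<in>S. q y) \<le> (\<Sum>y\<in>S. \<bar>p y - q y\<bar>)"
    by (subst sum_subtractf[symmetric]) (intro sum_mono, simp)
  ultimately show ?thesis using H_le pq rp sum_p by linarith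
qed

lemma abs_sum_mult_diff_le:
  fixes g :: "'a \<Rightarrow> real"
  assumes "\<And>y. \<bar>g y\<bar> \<le> B"
  shows "\<bar>(\<Sum>y\<in>S. q y * g y) - (\<Sum>y\<in>S. r y * g y)\<bar> \<le> B * (\<Sum>y\<in>S. \<bar>q y - r y\<bar>)"
proof -
  have "\<bar>(\<Sum>y\<in>S. q y * g y) - (\<Sum>y\<in>S. r y * g y)\<bar> \<le> (\<Sum>y\<in>S. \<bar>(q y - r y) * g y\<bar>)"
    by (simp add: sum_abs left_diff_distrib flip: sum_subtractf)
  also have "\<dots> \<le> B * (\<Sum>y\<in>S. \<bar>q y - r y\<bar>)"
    using assms by (simp add: sum_distrib_left abs_mult mult.commute mult_right_mono sum_mono)
  finally show ?thesis .
qed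

lemma sum_sqrt_ratio_nonneg_of_prod_le:
  fixes a b :: "'i \<Rightarrow> real"
  assumes I: "finite I" and a: "\<And>i. i \<in> I \<Longrightarrow> a i > 0" and b: "\<And>i. i \<in> I \<Longrightarrow> b i \<ge> 0"
    and prod_le: "(\<Prod>i\<in>I. a i) \<le> (\<Prod>i\<in>I. b i)"
  shows "(\<Sum>i\<in>I. sqrt (b i / a i) - 1) \<ge> 0"
proof -
  have prod_a: "(\<Prod>i\<in>I. a i) > 0" using a by (intro prod_pos) auto
  have b_pos: "b i > 0" if i: "i \<in> I" for i
  proof (rule ccontr)
    assume "\<not> b i > 0"
    then have "(\<Prod>i\<in>I. b i) = 0" using b[OF i] I i by (intro prod_zero) auto
    then show False using prod_le prod_a by linarith
  qed
  have "0 \<le> (ln (\<Prod>i\<in>I. b i) - ln (\<Prod>i\<in>I. a i)) / 2"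
    using prod_le prod_a by simp
  also have "\<dots> = (\<Sum>i\<in>I. (ln (b i) - ln (a i)) / 2)"
    using I a b_pos by (simp add: ln_prod sum_subtractf less_imp_neq[symmetric] flip: sum_divide_distrib)
  also have "\<dots> = (\<Sum>i\<in>I. ln (sqrt (b i / a i)))"
  proof (intro sum.cong refl)
    fix i assume "i \<in> I"
    then have "a i > 0" "b i > 0" using a b_pos by auto
    then show "(ln (b i) - ln (a i)) / 2 = ln (sqrt (b i / a i))" by (simp add: ln_sqrt ln_div)
  qed
  also have "\<dots> \<le> (\<Sum>i\<in>I. sqrt (b i / a i) - 1)"
    using a b_pos by (intro sum_mono ln_le_minus_one) auto
  finally show ?thesis .
qed

lemma abs_summable_on_pmf_times_bounded:
  fixes g :: "'a \<Rightarrow> real"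
  assumes "\<And>y. \<bar>g y\<bar> \<le> B"
  shows "Infinite_Set_Sum.abs_summable_on (\<lambda>y. pmf P y * g y) A"
proof (rule abs_summable_on_comparison_test')
  show "Infinite_Set_Sum.abs_summable_on (\<lambda>y. B * pmf P y) A"
    by (intro abs_summable_on_cmult_right pmf_abs_summable)
  show "norm (pmf P y * g y) \<le> B * pmf P y" for y
    using assms[of y] by (simp add: abs_mult mult.commute mult_right_mono)
qed

lemma pmf_expectation_minus_sum_le:
  fixes g :: "'a \<Rightarrow> real"
  assumes S: "finite S" and g: "\<And>y. \<bar>g y\<bar> \<le> B"
  shows "\<bar>measure_pmf.expectation P g - (\<Sum>y\<in>S. pmf P y * g y)\<bar> \<le> B * (1 - (\<Sum>y\<in>S. pmf P y))"
proof -
  define h where "h y = pmf P y * g y" for y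
  have h: "Infinite_Set_Sum.abs_summable_on h A" for A
    unfolding h_def by (rule abs_summable_on_pmf_times_bounded[OF g])
  have "measure_pmf.expectation P g - (\<Sum>y\<in>S. pmf P y * g y) = infsetsum h (UNIV - S)"
    using infsetsum_Diff[OF h[of UNIV], of S] S
    by (simp add: h_def pmf_expectation_eq_infsetsum)
  also have "\<bar>\<dots>\<bar> \<le> infsetsum (\<lambda>y. B * pmf P y) (UNIV - S)"
  proof (rule order_trans[OF _ infsetsum_mono])
    show "\<bar>infsetsum h (UNIV - S)\<bar> \<le> infsetsum (\<lambda>y. \<bar>h y\<bar>) (UNIV - S)"
      using norm_infsetsum_bound[of h "UNIV - S"] by simp
    show "Infinite_Set_Sum.abs_summable_on (\<lambda>y. \<bar>h y\<bar>) (UNIV - S)"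
      using abs_summable_on_normI[OF h[of "UNIV - S"]] by simp
    show "Infinite_Set_Sum.abs_summable_on (\<lambda>y. B * pmf P y) (UNIV - S)"
      by (intro abs_summable_on_cmult_right pmf_abs_summable)
    show "\<bar>h y\<bar> \<le> B * pmf P y" for y
      unfolding h_def using g[of y] by (simp add: abs_mult mult.commute mult_right_mono)
  qed
  also have "\<dots> = B * measure_pmf.prob P (UNIV - S)"
    by (simp add: infsetsum_cmult_right pmf_abs_summable measure_pmf_conv_infsetsum)
  also have "measure_pmf.prob P (UNIV - S) = 1 - measure_pmf.prob P S"
    by (simp add: measure_pmf.prob_compl[symmetric] Compl_eq_Diff_UNIV)
  also have "measure_pmf.prob P S = (\<Sum>y\<in>S. pmf P y)"
    using S by (simp add: measure_measure_pmf_finite)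
  finally show ?thesis .
qed

lemma borel_measurable_pmf_expectation:
  fixes F :: "'a \<Rightarrow> nat pmf" and g :: "nat \<Rightarrow> real"
  assumes F: "\<And>y. (\<lambda>\<theta>. pmf (F \<theta>) y) \<in> borel_measurable M" and g: "\<And>y. \<bar>g y\<bar> \<le> B"
  shows "(\<lambda>\<theta>. measure_pmf.expectation (F \<theta>) g) \<in> borel_measurable M"
proof (rule borel_measurable_LIMSEQ_real)
  fix \<theta>
  have "(\<lambda>y. pmf (F \<theta>) y * g y) sums infsetsum (\<lambda>y. pmf (F \<theta>) y * g y) UNIV"
    by (intro sums_infsetsum_nat' abs_summable_on_pmf_times_bounded[OF g])
  then show "(\<lambda>m. \<Sum>y<m. pmf (F \<theta>) y * g y) \<longlonglongrightarrow> measure_pmf.expectation (F \<theta>) g"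
    by (simp add: sums_def pmf_expectation_eq_infsetsum)
next
  show "(\<lambda>\<theta>. \<Sum>y<m. pmf (F \<theta>) y * g y) \<in> borel_measurable M" for m
    using F by measurable
qed

lemma finite_pmf_ge:
  assumes c: "c > 0"
  shows "finite {y. c \<le> pmf P y}"
proof (rule ccontr)
  assume "infinite {y. c \<le> pmf P y}"
  then obtain A where A: "finite A" "card A = nat \<lceil>1 / c\<rceil> + 1" "A \<subseteq> {y. c \<le> pmf P y}"
    using infinite_arbitrarily_large by blast
  have "real (card A) * c = (\<Sum>y\<in>A. c)" by simp
  also have "\<dots> \<le> (\<Sum>y\<in>A. pmf P y)" using A by (intro sum_mono) auto
  also have "\<dots> = measure_pmf.prob P A" using A by (simp add: measure_measure_pmf_finite)
  also have "\<dots> \<le> 1" by simp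
  finally have "real (card A) * c \<le> 1" .
  moreover have "real (card A) > 1 / c" using A(2) by linarith
  ultimately show False using c by (simp add: field_simps)
qed

definition sample_count :: "nat \<Rightarrow> (nat \<Rightarrow> 'a) \<Rightarrow> 'a \<Rightarrow> nat" where
  "sample_count n ys y = card {i\<in>{..<n}. ys i = y}"

lemma sample_count_le: "sample_count n ys y \<le> n"
  using card_mono[of "{..<n}" "{i\<in>{..<n}. ys i = y}"] unfolding sample_count_def by auto

lemma sum_sample_eq_sum_count:
  assumes S: "finite S" and ys: "\<And>i. i < n \<Longrightarrow> ys i \<in> S"
  shows "(\<Sum>i<n. g (ys i)) = (\<Sum>y\<in>S. real (sample_count n ys y) * g y)"
proof -
  have "(\<Sum>i<n. g (ys i)) = (\<Sum>y\<in>S. \<Sum>i\<in>{i\<in>{..<n}. ys i = y}. g (ys i))"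
    using ys by (intro sum.group[symmetric] S) auto
  also have "\<dots> = (\<Sum>y\<in>S. real (sample_count n ys y) * g y)"
    unfolding sample_count_def by (intro sum.cong refl) auto
  finally show ?thesis .
qed

lemma prod_of_bool:
  "finite A \<Longrightarrow> (\<Prod>x\<in>A. of_bool (P x) :: 'a :: comm_semiring_1) = of_bool (\<forall>x\<in>A. P x)"
  by (induction A rule: finite_induct) auto

lemma expectation_Pi_pmf_indicator_pair:
  assumes I: "finite I" and ij: "i \<in> I" "j \<in> I"
  shows "measure_pmf.expectation (Pi_pmf I d (\<lambda>_. Y))
           (\<lambda>ys. of_bool (ys i = y) * of_bool (ys j = y) :: real)
         = (if i = j then pmf Y y else (pmf Y y)\<^sup>2)"
proof -
  define f where "f k v = (of_bool (k \<notin> {i, j} \<or> v = y) :: real)" for k v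
  have indicators: "(\<lambda>ys. of_bool (ys i = y) * of_bool (ys j = y)) = (\<lambda>ys. \<Prod>k\<in>I. f k (ys k))"
    using ij unfolding f_def prod_of_bool[OF I] by (intro ext) auto
  have "measure_pmf.expectation (Pi_pmf I d (\<lambda>_. Y)) (\<lambda>ys. \<Prod>k\<in>I. f k (ys k))
      = (\<Prod>k\<in>I. measure_pmf.expectation Y (f k))"
    by (rule expectation_prod_Pi_pmf[OF I])
       (auto simp: f_def intro!: measure_pmf.integrable_const_bound[where B=1])
  also have "\<dots> = (\<Prod>k\<in>I. if k \<in> {i, j} then pmf Y y else 1)"
  proof (intro prod.cong refl)
    fix k
    have "f k = (if k \<in> {i, j} then indicator {y} else (\<lambda>_. 1))" by (auto simp: f_def indicator_def)
    then show "measure_pmf.expectation Y (f k) = (if k \<in> {i, j} then pmf Y y else 1)"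
      by (simp add: measure_pmf_single)
  qed
  also have "\<dots> = (\<Prod>k\<in>{i, j}. pmf Y y)"
  proof -
    have "I \<inter> {k. k = i \<or> k = j} = {i, j}" using ij by auto
    then show ?thesis using I by (simp add: prod.If_cases)
  qed
  finally show ?thesis by (simp add: indicators power2_eq_square)
qed

lemma expectation_Pi_pmf_centered_indicator_pair:
  assumes I: "finite I" and ij: "i \<in> I" "j \<in> I"
  shows "measure_pmf.expectation (Pi_pmf I d (\<lambda>_. Y))
           (\<lambda>ys. (of_bool (ys i = y) - pmf Y y) * (of_bool (ys j = y) - pmf Y y) :: real)
         = (if i = j then pmf Y y - (pmf Y y)\<^sup>2 else 0)"
proof -
  let ?P = "Pi_pmf I d (\<lambda>_. Y)" and ?p = "pmf Y y"
  define X where "X k ys = (of_bool (ys k = y) :: real)" for k and ys :: "'a \<Rightarrow> 'b"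
  have int: "integrable (measure_pmf ?P) (X k)" "integrable (measure_pmf ?P) (\<lambda>ys. X i ys * X j ys)" for k
    by (auto simp: X_def intro!: measure_pmf.integrable_const_bound[where B=1])
  have EX: "measure_pmf.expectation ?P (X k) = ?p" if "k \<in> I" for k
  proof -
    have "X k = (\<lambda>ys. of_bool (ys k = y) * of_bool (ys k = y))" by (auto simp: X_def)
    then show ?thesis using expectation_Pi_pmf_indicator_pair[OF I that that, of d Y y] by simp
  qed
  have "(\<lambda>ys. (X i ys - ?p) * (X j ys - ?p)) = (\<lambda>ys. X i ys * X j ys - ?p * X i ys - ?p * X j ys + ?p\<^sup>2)"
    by (auto simp: algebra_simps power2_eq_square)
  then have "measure_pmf.expectation ?P (\<lambda>ys. (X i ys - ?p) * (X j ys - ?p))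
      = measure_pmf.expectation ?P (\<lambda>ys. X i ys * X j ys) - ?p * ?p - ?p * ?p + ?p\<^sup>2"
    using int EX ij by simp
  also have "\<dots> = (if i = j then ?p - ?p\<^sup>2 else 0)"
    using expectation_Pi_pmf_indicator_pair[OF I ij, of d Y y] by (simp add: X_def power2_eq_square)
  finally show ?thesis by (simp add: X_def)
qed

lemma expectation_sample_count_sq_dev:
  fixes Y :: "'a pmf"
  shows "measure_pmf.expectation (Pi_pmf {..<n} d (\<lambda>_. Y))
           (\<lambda>ys. (real (sample_count n ys y) - real n * pmf Y y)\<^sup>2)
         = real n * pmf Y y * (1 - pmf Y y)"
proof -
  let ?P = "Pi_pmf {..<n} d (\<lambda>_. Y)" and ?p = "pmf Y y"
  define Z where "Z i ys = (of_bool (ys i = y) - ?p :: real)" for i and ys :: "nat \<Rightarrow> 'a"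
  have "(real (sample_count n ys y) - real n * ?p)\<^sup>2 = (\<Sum>i<n. \<Sum>j<n. Z i ys * Z j ys)" for ys
  proof -
    have "real (sample_count n ys y) - real n * ?p = (\<Sum>i<n. Z i ys)"
      by (simp add: sample_count_def Z_def sum_subtractf Int_def conj_commute)
    then show ?thesis by (simp add: power2_eq_square sum_product)
  qed
  moreover have "integrable (measure_pmf ?P) (\<lambda>ys. Z i ys * Z j ys)" for i j
    using pmf_le_1[of Y y]
    by (intro measure_pmf.integrable_const_bound[where B=1]) (auto simp: Z_def abs_mult intro!: mult_le_one)
  ultimately have "measure_pmf.expectation ?P (\<lambda>ys. (real (sample_count n ys y) - real n * ?p)\<^sup>2)
      = (\<Sum>i<n. \<Sum>j<n. measure_pmf.expectation ?P (\<lambda>ys. Z i ys * Z j ys))"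
    by (simp add: Bochner_Integration.integral_sum Bochner_Integration.integrable_sum)
  also have "\<dots> = (\<Sum>i<n. \<Sum>j<n. if i = j then ?p - ?p\<^sup>2 else 0)"
    unfolding Z_def by (intro sum.cong refl expectation_Pi_pmf_centered_indicator_pair) auto
  also have "\<dots> = real n * ?p * (1 - ?p)" by (simp add: power2_eq_square algebra_simps)
  finally show ?thesis .
qed

lemma integrable_fun_sample_count:
  "integrable (measure_pmf P) (\<lambda>ys. f (sample_count n ys y) :: real)"
proof (rule measure_pmf.integrable_const_bound[where B="\<Sum>k\<le>n. \<bar>f k\<bar>"])
  show "AE ys in measure_pmf P. norm (f (sample_count n ys y)) \<le> (\<Sum>k\<le>n. \<bar>f k\<bar>)"
    using sample_count_le by (auto intro!: AE_I2 member_le_sum)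
qed simp

lemma expectation_chi_square_summand:
  fixes Y :: "'a pmf"
  assumes pos: "pmf Y y > 0" and n: "n > 0"
  shows "measure_pmf.expectation (Pi_pmf {..<n} d (\<lambda>_. Y))
           (\<lambda>ys. (sample_count n ys y / n - pmf Y y)\<^sup>2 / pmf Y y) \<le> 1 / n"
proof -
  have "(\<lambda>ys. (sample_count n ys y / n - pmf Y y)\<^sup>2 / pmf Y y)
      = (\<lambda>ys. (real (sample_count n ys y) - real n * pmf Y y)\<^sup>2 / (real n ^ 2 * pmf Y y))"
    using n by (intro ext) (simp add: power_divide field_simps)
  then have "measure_pmf.expectation (Pi_pmf {..<n} d (\<lambda>_. Y))
      (\<lambda>ys. (sample_count n ys y / n - pmf Y y)\<^sup>2 / pmf Y y)
      = real n * pmf Y y * (1 - pmf Y y) / (real n ^ 2 * pmf Y y)"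
    by (simp only: integral_divide_zero expectation_sample_count_sq_dev)
  also have "\<dots> = (1 - pmf Y y) / n" using n pos by (simp add: power2_eq_square)
  also have "\<dots> \<le> 1 / n" using pos by (simp add: divide_right_mono)
  finally show ?thesis .
qed

lemma prob_chi_square_ge_le:
  fixes Y :: "'a pmf"
  assumes S: "finite S" and pos: "\<And>y. y \<in> S \<Longrightarrow> pmf Y y > 0" and n: "n > 0" and t: "t > 0"
  shows "measure_pmf.prob (Pi_pmf {..<n} d (\<lambda>_. Y))
     {ys. t \<le> chi_square S (pmf Y) (\<lambda>y. sample_count n ys y / n)} \<le> real (card S) / (real n * t)"
proof -
  let ?P = "Pi_pmf {..<n} d (\<lambda>_. Y)"
  define u where "u y ys = (sample_count n ys y / n - pmf Y y)\<^sup>2 / pmf Y y" for y ys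
  have int: "integrable (measure_pmf ?P) (u y)" for y
    unfolding u_def by (rule integrable_fun_sample_count)
  have "measure_pmf.prob ?P {ys \<in> space (measure_pmf ?P). t \<le> (\<Sum>y\<in>S. u y ys)}
      \<le> measure_pmf.expectation ?P (\<lambda>ys. \<Sum>y\<in>S. u y ys) / t"
  proof (rule integral_Markov_inequality_measure)
    show "integrable (measure_pmf ?P) (\<lambda>ys. \<Sum>y\<in>S. u y ys)" using int by auto
    show "AE ys in measure_pmf ?P. 0 \<le> (\<Sum>y\<in>S. u y ys)"
      using pos by (auto simp: u_def intro!: sum_nonneg divide_nonneg_pos)
  qed (use t in auto)
  also have "\<dots> = (\<Sum>y\<in>S. measure_pmf.expectation ?P (u y)) / t"
    using int by (subst Bochner_Integration.integral_sum) auto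
  also have "\<dots> \<le> (\<Sum>y\<in>S. 1 / real n) / t"
    unfolding u_def using pos n t by (intro divide_right_mono sum_mono expectation_chi_square_summand) auto
  finally show ?thesis by (simp add: u_def chi_square_def field_simps)
qed

lemma prob_sample_not_in_le:
  "measure_pmf.prob (Pi_pmf {..<n} d (\<lambda>_. Y)) {ys. \<exists>i<n. ys i \<notin> S} \<le> real n * (1 - measure_pmf.prob Y S)"
proof -
  let ?P = "Pi_pmf {..<n} d (\<lambda>_. Y)"
  have "{ys. \<exists>i<n. ys i \<notin> S} = (\<Union>i<n. (\<lambda>ys. ys i) -` (- S))" by auto
  then have "measure_pmf.prob ?P {ys. \<exists>i<n. ys i \<notin> S} \<le> (\<Sum>i<n. measure_pmf.prob ?P ((\<lambda>ys. ys i) -` (- S)))"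
    by (simp add: measure_pmf.finite_measure_subadditive_finite)
  also have "\<dots> = (\<Sum>i<n. measure_pmf.prob Y (- S))"
    by (intro sum.cong refl) (simp add: Pi_pmf_component flip: measure_map_pmf)
  also have "\<dots> = real n * (1 - measure_pmf.prob Y S)"
    by (simp add: measure_pmf.prob_compl[symmetric] Compl_eq_Diff_UNIV)
  finally show ?thesis .
qed

definition mix_pmf :: "(real \<Rightarrow> nat pmf) \<Rightarrow> real measure \<Rightarrow> nat \<Rightarrow> real" where
  "mix_pmf F H y = (\<integral>\<theta>. pmf (F \<theta>) y \<partial>H)"

lemma mix_lik_eq_prod_mix_pmf: "mix_lik F H n ys = (\<Prod>i<n. mix_pmf F H (ys i))"
  unfolding mix_lik_def mix_pmf_def ..

lemma mix_pmf_nonneg: "mix_pmf F H y \<ge> 0"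
  unfolding mix_pmf_def by (rule Bochner_Integration.integral_nonneg) simp

context
  fixes F :: "real \<Rightarrow> nat pmf" and H :: "real measure"
  assumes H: "prob_space H" and H_sets: "sets H = sets borel"
    and F: "\<And>y. (\<lambda>\<theta>. pmf (F \<theta>) y) \<in> borel_measurable borel"
begin

interpretation H: prob_space H by (rule H)

lemma measurable_pmf_mix: "(\<lambda>\<theta>. pmf (F \<theta>) y) \<in> borel_measurable H"
  using F[of y] by (simp add: measurable_cong_sets[OF H_sets refl])

lemma integrable_pmf_mix: "integrable H (\<lambda>\<theta>. pmf (F \<theta>) y)"
  by (rule H.integrable_const_bound[where B=1]) (use measurable_pmf_mix pmf_le_1 in \<open>auto intro!: AE_I2\<close>)

lemma sum_mix_pmf_eq_integral:
  "(\<Sum>y\<in>S. mix_pmf F H y * c y) = (\<integral>\<theta>. (\<Sum>y\<in>S. pmf (F \<theta>) y * c y) \<partial>H)"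
  unfolding mix_pmf_def using integrable_pmf_mix by (subst Bochner_Integration.integral_sum) auto

lemma mix_expect_minus_sum_le:
  assumes S: "finite S" and g: "\<And>y. \<bar>g y\<bar> \<le> B"
  shows "\<bar>mix_expect F H g - (\<Sum>y\<in>S. mix_pmf F H y * g y)\<bar> \<le> B * (1 - (\<Sum>y\<in>S. mix_pmf F H y))"
proof -
  define E where "E \<theta> = measure_pmf.expectation (F \<theta>) g" for \<theta>
  have E: "integrable H E"
  proof (rule H.integrable_const_bound[where B=B])
    show "E \<in> borel_measurable H"
      unfolding E_def by (rule borel_measurable_pmf_expectation[OF measurable_pmf_mix g])
    show "AE \<theta> in H. norm (E \<theta>) \<le> B"
      using pmf_expectation_minus_sum_le[of "{}" g B] g by (simp add: E_def)
  qed
  have sums: "integrable H (\<lambda>\<theta>. \<Sum>y\<in>S. pmf (F \<theta>) y * c y)" for c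
    using integrable_pmf_mix by auto
  have sum_pmf: "integrable H (\<lambda>\<theta>. \<Sum>y\<in>S. pmf (F \<theta>) y)"
    using integrable_pmf_mix by auto
  have "\<bar>mix_expect F H g - (\<Sum>y\<in>S. mix_pmf F H y * g y)\<bar>
      = \<bar>\<integral>\<theta>. E \<theta> - (\<Sum>y\<in>S. pmf (F \<theta>) y * g y) \<partial>H\<bar>"
    unfolding sum_mix_pmf_eq_integral mix_expect_def E_def[symmetric] using E sums by simp
  also have "\<dots> \<le> (\<integral>\<theta>. B * (1 - (\<Sum>y\<in>S. pmf (F \<theta>) y)) \<partial>H)"
    using E sums sum_pmf unfolding E_def
    by (intro integral_abs_bound_integral) (auto simp: pmf_expectation_minus_sum_le[OF S g])
  also have "\<dots> = B * (1 - (\<Sum>y\<in>S. mix_pmf F H y))"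
    using sum_pmf sum_mix_pmf_eq_integral[where c="\<lambda>_. 1" and S=S] by (simp add: H.prob_space)
  finally show ?thesis .
qed

lemma sum_mix_pmf_le_1:
  assumes "finite S"
  shows "(\<Sum>y\<in>S. mix_pmf F H y) \<le> 1"
proof -
  have "(\<Sum>y\<in>S. mix_pmf F H y) = (\<integral>\<theta>. (\<Sum>y\<in>S. pmf (F \<theta>) y) \<partial>H)"
    using sum_mix_pmf_eq_integral[where c="\<lambda>_. 1" and S=S] by simp
  also have "\<dots> \<le> (\<integral>\<theta>. 1 \<partial>H)"
  proof (rule integral_mono)
    show "integrable H (\<lambda>\<theta>. \<Sum>y\<in>S. pmf (F \<theta>) y)" using integrable_pmf_mix by auto
    show "(\<Sum>y\<in>S. pmf (F \<theta>) y) \<le> 1" for \<theta>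
      using assms by (simp flip: measure_measure_pmf_finite)
  qed simp
  finally show ?thesis by (simp add: H.prob_space)
qed

end

lemma ln_powr_div_sqrt_ge:
  fixes x a :: real
  assumes "exp 1 \<le> x" "0 \<le> a"
  shows "1 / sqrt x \<le> ln x powr a / sqrt x"
proof -
  have x: "0 < x" using assms(1) exp_gt_zero[of 1] by linarith
  then have "1 \<le> ln x" using assms(1) ln_ge_iff[of x 1] by simp
  then show ?thesis using assms x by (intro divide_right_mono ge_one_powr_ge_zero) auto
qed

text \<open>The constants 18 and 10 make each of \<open>9 \<surd>t\<close> and \<open>4 \<surd>\<tau> + \<tau>\<close> at most
  \<open>\<delta> L / (2 (B + 1))\<close>.\<close>
lemma deviation_threshold_le:
  fixes B \<delta> \<tau> x L :: real
  assumes B: "0 \<le> B" and \<delta>: "0 < \<delta>" and \<tau>: "0 \<le> \<tau>" "\<tau> \<le> 1"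
    and x_pos: "0 < x" and x_\<tau>: "x * \<tau> \<le> (\<delta> / (10 * (B + 1)))\<^sup>2" and L: "1 / sqrt x \<le> L"
  shows "B * (9 * sqrt ((\<delta> / (18 * (B + 1)) * L)\<^sup>2) + 4 * sqrt \<tau> + \<tau>) \<le> \<delta> * L"
proof -
  have "0 < 1 / sqrt x" using x_pos by simp
  then have L_pos: "L > 0" using L by linarith
  define k where "k = \<delta> / (10 * (B + 1))"
  have k: "k > 0" unfolding k_def using B \<delta> by simp
  have "\<tau> \<le> k\<^sup>2 / x" using x_\<tau> x_pos by (simp add: k_def pos_le_divide_eq mult.commute)
  then have "sqrt \<tau> \<le> sqrt (k\<^sup>2 / x)" by (rule real_sqrt_le_mono)
  also have "\<dots> = k * (1 / sqrt x)" using k by (simp add: real_sqrt_divide)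
  also have "\<dots> \<le> k * L" using L k by (intro mult_left_mono) auto
  finally have sqrt_\<tau>: "sqrt \<tau> \<le> k * L" .
  have "\<tau> \<le> sqrt \<tau>"
  proof -
    have "sqrt \<tau> * sqrt \<tau> \<le> sqrt \<tau> * 1" using \<tau> by (intro mult_left_mono) auto
    then show ?thesis using \<tau> by simp
  qed
  moreover have "9 * sqrt ((\<delta> / (18 * (B + 1)) * L)\<^sup>2) = 5 * (k * L)"
  proof -
    have "sqrt ((\<delta> / (18 * (B + 1)) * L)\<^sup>2) = \<delta> * L / (18 * (B + 1))"
      using B \<delta> L_pos by (intro real_sqrt_abs[THEN trans] abs_of_nonneg) auto
    then show ?thesis using B by (simp add: k_def field_simps)
  qed
  ultimately have "9 * sqrt ((\<delta> / (18 * (B + 1)) * L)\<^sup>2) + 4 * sqrt \<tau> + \<tau> \<le> 10 * k * L"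
    using sqrt_\<tau> by linarith
  also have "\<dots> = \<delta> * L / (B + 1)" using B by (simp add: k_def field_simps)
  finally have "B * (9 * sqrt ((\<delta> / (18 * (B + 1)) * L)\<^sup>2) + 4 * sqrt \<tau> + \<tau>) \<le> B * (\<delta> * L / (B + 1))"
    using B by (rule mult_left_mono)
  also have "\<dots> \<le> \<delta> * L" using B \<delta> L_pos by (simp add: field_simps)
  finally show ?thesis .
qed

lemma bigo_ln_div_sq_rate_tendsto_0:
  fixes f :: "nat \<Rightarrow> real" and \<alpha> c :: real
  assumes f: "f \<in> O(\<lambda>n. ln (real n))" and \<alpha>: "\<alpha> > 0" and c: "c \<noteq> 0"
  shows "(\<lambda>n. f n / (real n * (c * (ln (real n) powr ((1 + \<alpha>) / 2) / sqrt (real n)))\<^sup>2)) \<longlonglongrightarrow> 0"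
proof -
  let ?D = "\<lambda>n. real n * (c * (ln (real n) powr ((1 + \<alpha>) / 2) / sqrt (real n)))\<^sup>2"
  obtain C where C: "eventually (\<lambda>n. norm (f n) \<le> C * norm (ln (real n))) sequentially"
    using f by (elim landau_o.bigE)
  have "eventually (\<lambda>n. norm (f n / ?D n) \<le> C / c\<^sup>2 * ln (real n) powr (- \<alpha>)) sequentially"
    using C eventually_ge_at_top[of 2]
  proof eventually_elim
    case (elim n)
    have ln: "ln (real n) > 0" using elim by simp
    have "(ln (real n) powr ((1 + \<alpha>) / 2))\<^sup>2 = ln (real n) powr (1 + \<alpha>)"
      by (simp add: power2_eq_square flip: powr_add)
    also have "\<dots> = ln (real n) * ln (real n) powr \<alpha>" using ln by (simp add: powr_add)
    finally have "(ln (real n) powr ((1 + \<alpha>) / 2))\<^sup>2 = ln (real n) * ln (real n) powr \<alpha>" .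
    then have D: "?D n = c\<^sup>2 * (ln (real n) * ln (real n) powr \<alpha>)"
      using elim by (simp add: power_mult_distrib power_divide)
    have D_pos: "?D n > 0" unfolding D using ln c by simp
    have "norm (f n / ?D n) = norm (f n) / ?D n" using D_pos by simp
    also have "\<dots> \<le> C * ln (real n) / ?D n"
      using elim(1) ln D_pos by (intro divide_right_mono) auto
    also have "\<dots> = C / c\<^sup>2 * ln (real n) powr (- \<alpha>)"
      unfolding D using ln c by (simp add: powr_minus field_simps)
    finally show ?case .
  qed
  moreover have "(\<lambda>n. C / c\<^sup>2 * ln (real n) powr (- \<alpha>)) \<longlonglongrightarrow> 0"
    using \<alpha> by (intro tendsto_mult_right_zero tendsto_neg_powr
        filterlim_compose[OF ln_at_top filterlim_real_sequentially]) auto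
  ultimately show ?thesis by (rule Lim_null_comparison)
qed

locale mixture_model =
  fixes G :: "real measure" and F :: "real \<Rightarrow> nat pmf" and Y :: "nat pmf"
  assumes G_prob: "prob_space G" and G_sets: "sets G = sets borel"
    and F_meas: "\<And>y. (\<lambda>\<theta>. pmf (F \<theta>) y) \<in> borel_measurable borel"
    and Y_marg: "\<And>y. pmf Y y = (\<integral>\<theta>. pmf (F \<theta>) y \<partial>G)"
begin

lemma GMLE_sum_sqrt_ratio_nonneg:
  assumes GMLE: "is_GMLE F n ys Gh" and ys: "\<And>i. i < n \<Longrightarrow> pmf Y (ys i) > 0"
  shows "(\<Sum>i<n. sqrt (mix_pmf F Gh (ys i) / pmf Y (ys i)) - 1) \<ge> 0"
proof (rule sum_sqrt_ratio_nonneg_of_prod_le)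
  have "mix_lik F G n ys \<le> mix_lik F Gh n ys" using GMLE G_prob G_sets unfolding is_GMLE_def by blast
  then show "(\<Prod>i<n. pmf Y (ys i)) \<le> (\<Prod>i<n. mix_pmf F Gh (ys i))"
    by (simp add: mix_lik_eq_prod_mix_pmf mix_pmf_def Y_marg)
qed (use ys mix_pmf_nonneg in auto)

lemma GMLE_deviation_le:
  fixes g :: "nat \<Rightarrow> real"
  assumes GMLE: "is_GMLE F n ys Gh" and g: "\<And>y. \<bar>g y\<bar> \<le> B" and n: "n > 0"
    and S: "finite S" and pos: "\<And>y. y \<in> S \<Longrightarrow> pmf Y y > 0" and ys: "\<And>i. i < n \<Longrightarrow> ys i \<in> S"
  shows "\<bar>mix_expect F Gh g - (\<Sum>i<n. g (ys i)) / n\<bar>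
    \<le> B * (9 * sqrt (chi_square S (pmf Y) (\<lambda>y. sample_count n ys y / n))
            + 4 * sqrt (1 - measure_pmf.prob Y S) + (1 - measure_pmf.prob Y S))"
proof -
  define q where "q = mix_pmf F Gh"
  define r where "r = (\<lambda>y. sample_count n ys y / n)"
  have Gh: "prob_space Gh" "sets Gh = sets borel" using GMLE unfolding is_GMLE_def by auto
  have sum_r: "(\<Sum>y\<in>S. r y * c y) = (\<Sum>i<n. c (ys i)) / n" for c
  proof -
    have "(\<Sum>y\<in>S. r y * c y) = (\<Sum>y\<in>S. real (sample_count n ys y) * c y) / n"
      by (simp add: r_def sum_divide_distrib)
    then show ?thesis using sum_sample_eq_sum_count[OF S ys, where g=c] by simp
  qed
  have "(\<Sum>y\<in>S. r y * (sqrt (q y / pmf Y y) - 1)) \<ge> 0"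
    unfolding sum_r q_def using GMLE_sum_sqrt_ratio_nonneg[OF GMLE] pos ys by simp
  then have fit: "(\<Sum>y\<in>S. \<bar>q y - r y\<bar>) + (1 - (\<Sum>y\<in>S. q y))
      \<le> 9 * sqrt (chi_square S (pmf Y) r) + 4 * sqrt (1 - measure_pmf.prob Y S) + (1 - measure_pmf.prob Y S)"
    using pos S sum_mix_pmf_le_1[OF Gh F_meas S] mix_pmf_nonneg measure_pmf.prob_le_1[of Y S]
    by (intro fitted_l1_bound_of_sqrt_ratio) (auto simp: q_def measure_measure_pmf_finite)
  have cross: "\<bar>(\<Sum>y\<in>S. q y * g y) - (\<Sum>y\<in>S. r y * g y)\<bar> \<le> B * (\<Sum>y\<in>S. \<bar>q y - r y\<bar>)"
    using g by (rule abs_sum_mult_diff_le)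
  have "\<bar>mix_expect F Gh g - (\<Sum>y\<in>S. r y * g y)\<bar>
      \<le> \<bar>mix_expect F Gh g - (\<Sum>y\<in>S. q y * g y)\<bar> + \<bar>(\<Sum>y\<in>S. q y * g y) - (\<Sum>y\<in>S. r y * g y)\<bar>"
    using abs_triangle_ineq[of "mix_expect F Gh g - (\<Sum>y\<in>S. q y * g y)"
        "(\<Sum>y\<in>S. q y * g y) - (\<Sum>y\<in>S. r y * g y)"] by simp
  also have "\<dots> \<le> B * ((\<Sum>y\<in>S. \<bar>q y - r y\<bar>) + (1 - (\<Sum>y\<in>S. q y)))"
    using mix_expect_minus_sum_le[where g=g, OF Gh F_meas S g] cross unfolding q_def by (simp add: algebra_simps)
  also have "\<dots> \<le> B * (9 * sqrt (chi_square S (pmf Y) r) + 4 * sqrt (1 - measure_pmf.prob Y S) + (1 - measure_pmf.prob Y S))"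
    using fit g[of 0] by (intro mult_left_mono) auto
  finally show ?thesis unfolding sum_r unfolding r_def .
qed

lemma GMLE_deviation_prob_le:
  fixes Gh :: "(nat \<Rightarrow> nat) \<Rightarrow> real measure" and Psi :: "real measure \<Rightarrow> nat \<Rightarrow> real"
    and S :: "nat set" and n d :: nat and t :: real
  defines "P \<equiv> Pi_pmf {..<n} d (\<lambda>_. Y)" and "\<tau> \<equiv> 1 - measure_pmf.prob Y S"
  assumes GMLE: "\<And>ys. ys \<in> set_pmf P \<Longrightarrow> is_GMLE F n ys (Gh ys)"
    and Psi: "\<And>H y. \<bar>Psi H y\<bar> \<le> B"
    and unbiased: "\<And>ys. ys \<in> set_pmf P \<Longrightarrow> mix_expect F (Gh ys) (Psi (Gh ys)) = (\<integral>\<theta>. eta \<theta> \<partial>Gh ys)"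
    and n: "n > 0" and S: "finite S" and pos: "\<And>y. y \<in> S \<Longrightarrow> pmf Y y > 0" and t: "t > 0"
  shows "measure_pmf.prob P {ys. \<bar>(\<integral>\<theta>. eta \<theta> \<partial>Gh ys) - (\<Sum>i<n. Psi (Gh ys) (ys i)) / n\<bar>
            > B * (9 * sqrt t + 4 * sqrt \<tau> + \<tau>)}
         \<le> real n * \<tau> + real (card S) / (real n * t)"
    (is "measure_pmf.prob P ?T \<le> _")
proof -
  let ?chi = "\<lambda>ys. chi_square S (pmf Y) (\<lambda>y. sample_count n ys y / n)"
  have "?T \<inter> set_pmf P \<subseteq> {ys. \<exists>i<n. ys i \<notin> S} \<union> {ys. t \<le> ?chi ys}"
  proof (intro subsetI, rule ccontr)
    fix ys assume ys: "ys \<in> ?T \<inter> set_pmf P" and "ys \<notin> {ys. \<exists>i<n. ys i \<notin> S} \<union> {ys. t \<le> ?chi ys}"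
    then have inS: "\<And>i. i < n \<Longrightarrow> ys i \<in> S" and "?chi ys < t" and ysP: "ys \<in> set_pmf P" by auto
    then have "B * (9 * sqrt (?chi ys) + 4 * sqrt \<tau> + \<tau>) \<le> B * (9 * sqrt t + 4 * sqrt \<tau> + \<tau>)"
      using Psi[of "Gh ys" 0] by (intro mult_left_mono) auto
    moreover have "\<bar>(\<integral>\<theta>. eta \<theta> \<partial>Gh ys) - (\<Sum>i<n. Psi (Gh ys) (ys i)) / n\<bar>
        \<le> B * (9 * sqrt (?chi ys) + 4 * sqrt \<tau> + \<tau>)"
      using GMLE_deviation_le[where g="Psi (Gh ys)", OF GMLE[OF ysP] Psi n S pos inS] unbiased[OF ysP]
      unfolding \<tau>_def by simp
    ultimately show False using ys by simp
  qed
  then have "measure_pmf.prob P ?T \<le> measure_pmf.prob P ({ys. \<exists>i<n. ys i \<notin> S} \<union> {ys. t \<le> ?chi ys})"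
    by (subst measure_Int_set_pmf[symmetric]) (rule measure_pmf.finite_measure_mono, auto)
  also have "\<dots> \<le> measure_pmf.prob P {ys. \<exists>i<n. ys i \<notin> S} + measure_pmf.prob P {ys. t \<le> ?chi ys}"
    by (rule measure_Un_le) auto
  also have "\<dots> \<le> real n * \<tau> + real (card S) / (real n * t)"
    unfolding P_def \<tau>_def by (intro add_mono prob_sample_not_in_le prob_chi_square_ge_le S pos n t)
  finally show ?thesis .
qed

lemma GMLE_deviation_prob_le_rate:
  fixes Gh :: "(nat \<Rightarrow> nat) \<Rightarrow> real measure" and Psi :: "real measure \<Rightarrow> nat \<Rightarrow> real"
    and S :: "nat set" and n d :: nat and c \<alpha> \<delta> :: real
  defines "P \<equiv> Pi_pmf {..<n} d (\<lambda>_. Y)" and "S \<equiv> {y. c \<le> pmf Y y}"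
    and "\<tau> \<equiv> 1 - measure_pmf.prob Y S" and "L \<equiv> ln (real n) powr ((1 + \<alpha>) / 2) / sqrt (real n)"
  assumes GMLE: "\<And>ys. ys \<in> set_pmf P \<Longrightarrow> is_GMLE F n ys (Gh ys)"
    and Psi: "\<And>H y. \<bar>Psi H y\<bar> \<le> B"
    and unbiased: "\<And>ys. ys \<in> set_pmf P \<Longrightarrow> mix_expect F (Gh ys) (Psi (Gh ys)) = (\<integral>\<theta>. eta \<theta> \<partial>Gh ys)"
    and c: "c > 0" and n: "exp 1 \<le> real n" and n_\<tau>: "real n * \<tau> \<le> (\<delta> / (10 * (B + 1)))\<^sup>2"
    and \<alpha>: "\<alpha> \<ge> 0" and \<delta>: "\<delta> > 0"
  shows "measure_pmf.prob P {ys. \<bar>(\<integral>\<theta>. eta \<theta> \<partial>Gh ys) - (\<Sum>i<n. Psi (Gh ys) (ys i)) / n\<bar> > \<delta> * L}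
    \<le> real n * \<tau> + real (card S) / (real n * (\<delta> / (18 * (B + 1)) * L)\<^sup>2)"
proof -
  let ?t = "(\<delta> / (18 * (B + 1)) * L)\<^sup>2"
  have B: "B \<ge> 0" using Psi abs_ge_zero order_trans by meson
  have n_pos: "n > 0" using n exp_gt_zero[of 1] by (cases n) auto
  have L_ge: "1 / sqrt (real n) \<le> L"
    unfolding L_def using n \<alpha> by (intro ln_powr_div_sqrt_ge) auto
  moreover have "0 < 1 / sqrt (real n)" using n_pos by simp
  ultimately have L: "L > 0" by linarith
  have pos: "pmf Y y > 0" if "y \<in> S" for y using that c unfolding S_def by simp
  have \<tau>: "0 \<le> \<tau>" "\<tau> \<le> 1" by (auto simp: \<tau>_def)
  have "B * (9 * sqrt ?t + 4 * sqrt \<tau> + \<tau>) \<le> \<delta> * L"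
    using B \<delta> \<tau> n_pos n_\<tau> L_ge by (intro deviation_threshold_le) auto
  then have "measure_pmf.prob P {ys. \<bar>(\<integral>\<theta>. eta \<theta> \<partial>Gh ys) - (\<Sum>i<n. Psi (Gh ys) (ys i)) / n\<bar> > \<delta> * L}
      \<le> measure_pmf.prob P {ys. \<bar>(\<integral>\<theta>. eta \<theta> \<partial>Gh ys) - (\<Sum>i<n. Psi (Gh ys) (ys i)) / n\<bar>
          > B * (9 * sqrt ?t + 4 * sqrt \<tau> + \<tau>)}"
    by (intro measure_pmf.finite_measure_mono) auto
  also have "\<dots> \<le> real n * \<tau> + real (card S) / (real n * ?t)"
    unfolding P_def \<tau>_def using B \<delta> L c
    by (intro GMLE_deviation_prob_le[OF GMLE[unfolded P_def] Psi unbiased[unfolded P_def] n_pos]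
        pos) (auto simp: S_def intro: finite_pmf_ge)
  finally show ?thesis .
qed

end

theorem theorem3:
  fixes G :: "real measure" and F :: "real \<Rightarrow> nat pmf" and Ypmf :: "nat pmf"
    and Ghat :: "nat \<Rightarrow> (nat \<Rightarrow> nat) \<Rightarrow> real measure"
    and eta :: "real \<Rightarrow> real" and Psi :: "real measure \<Rightarrow> nat \<Rightarrow> real" and B :: real
  assumes G_prob: "prob_space G" and G_sets: "sets G = sets borel"
    and G_bdd: "\<exists>K. AE \<theta> in G. \<bar>\<theta>\<bar> \<le> K"
    and F_meas: "\<And>y. (\<lambda>\<theta>. pmf (F \<theta>) y) \<in> borel_measurable borel"
    and Y_marg: "\<And>y. pmf Ypmf y = (\<integral>\<theta>. pmf (F \<theta>) y \<partial>G)"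
    and cond: "\<exists>\<epsilon> :: nat \<Rightarrow> real. (\<forall>n. \<epsilon> n > 0) \<and> \<epsilon> \<longlonglongrightarrow> 0 \<and>
        (\<lambda>n. 1 - measure_pmf.prob Ypmf {y. pmf Ypmf y \<ge> \<epsilon> n / real n}) \<in> o(\<lambda>n. 1 / real n) \<and>
        (\<lambda>n. real (card {y. pmf Ypmf y \<ge> \<epsilon> n / real n})) \<in> O(\<lambda>n. ln (real n))"
    and Ghat_GMLE: "\<And>n ys. ys \<in> set_pmf (Pi_pmf {..<n} 0 (\<lambda>_. Ypmf)) \<Longrightarrow> is_GMLE F n ys (Ghat n ys)"
    and eta_meas: "eta \<in> borel_measurable borel"
    and eta_int: "\<And>n ys. ys \<in> set_pmf (Pi_pmf {..<n} 0 (\<lambda>_. Ypmf)) \<Longrightarrow> integrable (Ghat n ys) eta"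
    and Psi_bdd: "\<And>H y. \<bar>Psi H y\<bar> \<le> B"
    and Psi_unbiased: "\<And>n ys. ys \<in> set_pmf (Pi_pmf {..<n} 0 (\<lambda>_. Ypmf)) \<Longrightarrow>
        mix_expect F (Ghat n ys) (Psi (Ghat n ys)) = (\<integral>\<theta>. eta \<theta> \<partial>(Ghat n ys))"
  shows "\<forall>\<alpha>>0. \<forall>\<delta>>0. (\<lambda>n. measure_pmf.prob (Pi_pmf {..<n} 0 (\<lambda>_. Ypmf))
           {ys. \<bar>(\<integral>\<theta>. eta \<theta> \<partial>(Ghat n ys)) - (\<Sum>i<n. Psi (Ghat n ys) (ys i)) / real n\<bar>
                 > \<delta> * ln (real n) powr ((1 + \<alpha>) / 2) / sqrt (real n)}) \<longlonglongrightarrow> 0"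
proof (intro allI impI)
  interpret mixture_model G F Ypmf by (rule mixture_model.intro[OF G_prob G_sets F_meas Y_marg])
  fix \<alpha> \<delta> :: real assume \<alpha>: "\<alpha> > 0" and \<delta>: "\<delta> > 0"
  let ?prob = "\<lambda>n. measure_pmf.prob (Pi_pmf {..<n} 0 (\<lambda>_. Ypmf))
    {ys. \<bar>(\<integral>\<theta>. eta \<theta> \<partial>(Ghat n ys)) - (\<Sum>i<n. Psi (Ghat n ys) (ys i)) / real n\<bar>
       > \<delta> * ln (real n) powr ((1 + \<alpha>) / 2) / sqrt (real n)}"
  obtain \<epsilon> :: "nat \<Rightarrow> real" where \<epsilon>: "\<And>n. \<epsilon> n > 0"
    and tail: "(\<lambda>n. 1 - measure_pmf.prob Ypmf {y. pmf Ypmf y \<ge> \<epsilon> n / real n}) \<in> o(\<lambda>n. 1 / real n)"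
    and card: "(\<lambda>n. real (card {y. pmf Ypmf y \<ge> \<epsilon> n / real n})) \<in> O(\<lambda>n. ln (real n))"
    using cond by blast
  define \<tau> where "\<tau> n = 1 - measure_pmf.prob Ypmf {y. pmf Ypmf y \<ge> \<epsilon> n / real n}" for n
  define bound where "bound n = real n * \<tau> n + real (card {y. pmf Ypmf y \<ge> \<epsilon> n / real n}) /
    (real n * (\<delta> / (18 * (B + 1)) * (ln (real n) powr ((1 + \<alpha>) / 2) / sqrt (real n)))\<^sup>2)" for n
  have n_\<tau>: "(\<lambda>n. real n * \<tau> n) \<longlonglongrightarrow> 0"
    using smalloD_tendsto[OF tail] by (simp add: \<tau>_def mult.commute)
  have B: "B \<ge> 0" using Psi_bdd[of G 0] by linarith
  have "eventually (\<lambda>n. 0 \<le> ?prob n) sequentially" by simp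
  moreover have "eventually (\<lambda>n. real n * \<tau> n < (\<delta> / (10 * (B + 1)))\<^sup>2) sequentially"
    using order_tendstoD(2)[OF n_\<tau>] B \<delta> by simp
  then have "eventually (\<lambda>n. ?prob n \<le> bound n) sequentially"
    using eventually_ge_at_top[of "3 :: nat"]
  proof eventually_elim
    case (elim n)
    then show ?case
      using GMLE_deviation_prob_le_rate[where c="\<epsilon> n / real n" and n=n and \<alpha>=\<alpha> and \<delta>=\<delta>,
          OF Ghat_GMLE Psi_bdd Psi_unbiased] \<epsilon>[of n] \<alpha> \<delta> exp_le
      by (simp add: bound_def \<tau>_def mult.assoc)
  qed
  moreover have "bound \<longlonglongrightarrow> 0"
    unfolding bound_def using B \<delta>
    by (intro tendsto_add_zero n_\<tau> bigo_ln_div_sq_rate_tendsto_0[OF card \<alpha>]) simp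
  ultimately show "?prob \<longlonglongrightarrow> 0"
    by (rule tendsto_sandwich[OF _ _ tendsto_const])
qed

end
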